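(* Let $r\ge1$ and let $\mu=\langle\mu_1,\dots,\mu_{r+1}\rangle\in\mathbb{Z}^{r+1}$ with $\mu_1+\cdots+\mu_{r+1}=0$. Then the map of the previous theorem (juggling sequence $\mapsto$ multiset of roots $\varepsilon_i-\varepsilon_{i+j}$, one for each throw at time $i$ to height $j$) is a bijection between $\mathrm{JS}(\langle\mu_1,\dots,\mu_r\rangle,\langle\mu_1+\cdots+\mu_r\rangle,r)$ and $P_{A_r}(\mu)$; in particular \[K_{A_r}(\mu)=\mathsf{js}(\langle\mu_1,\dots,\mu_r\rangle,\langle\mu_1+\cdots+\mu_r\rangle,r).\]
   Context: A (magic) juggling state is a finitely supported integer vector $\mathbf{s}=\langle s_1,s_2,\dots\rangle$ indexed by heights $1,2,\dots$ (trailing zeros omitted). A juggling sequence of length $n$ from $\mathbf{a}$ to $\mathbf{b}$ is a sequence $(\mathbf{s}_0,\dots,\mathbf{s}_n)$ with $\mathbf{s}_0=\mathbf{a}$, $\mathbf{s}_n=\mathbf{b}$, such that for each $1\le i\le n$ there are nonnegative integers $c^{(i)}_1,c^{(i)}_2,\dots$ (finitely many nonzero) with $\sum_k c^{(i)}_k=(\mathbf{s}_{i-1})_1$ and $(\mathbf{s}_i)_k=(\mathbf{s}_{i-1})_{k+1}+c^{(i)}_k$ for all $k\ge1$; $c^{(i)}_j$ is the number of throws at time $i$ to height $j$. $\mathrm{JS}(\mathbf{a},\mathbf{b},n)$ is the set of these, $\mathsf{js}(\mathbf{a},\mathbf{b},n)$ its cardinality. $\varepsilon_1,\dots,\varepsilon_{r+1}$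 is the standard basis of $\mathbb{R}^{r+1}$, $\Phi^+_{A_r}=\{\varepsilon_i-\varepsilon_j:1\le i<j\le r+1\}$, $P_{A_r}(\mu)$ is the set of finite multisets of elements of $\Phi^+_{A_r}$ summing to $\mu$ (empty multiset allowed for $\mu=0$), and $K_{A_r}(\mu)=|P_{A_r}(\mu)|$. *)

theory Defs
  imports Main "HOL-Library.Multiset" "HOL-Library.Function_Algebras"
begin

text \<open>Juggling states: finitely supported integer vectors indexed by heights 1,2,...;
  encoded as functions nat => int with value 0 at the unused index 0.\<close>
definition jstate :: "(nat \<Rightarrow> int) \<Rightarrow> bool" where
  "jstate s \<longleftrightarrow> s 0 = 0 \<and> finite {k. s k \<noteq> 0}"

definition jstep :: "(nat \<Rightarrow> int) \<Rightarrow> (nat \<Rightarrow> int) \<Rightarrow> bool" where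
  "jstep s t \<longleftrightarrow> (\<exists>c::nat \<Rightarrow> nat. c 0 = 0 \<and> finite {k. c k \<noteq> 0} \<and>
      int (sum c {k. c k \<noteq> 0}) = s 1 \<and> (\<forall>k\<ge>1. t k = s (k + 1) + int (c k)))"

definition JS :: "(nat \<Rightarrow> int) \<Rightarrow> (nat \<Rightarrow> int) \<Rightarrow> nat \<Rightarrow> (nat \<Rightarrow> int) list set" where
  "JS a b n = {ss. length ss = n + 1 \<and> ss ! 0 = a \<and> ss ! n = b \<and>
      (\<forall>s\<in>set ss. jstate s) \<and> (\<forall>i<n. jstep (ss ! i) (ss ! (i + 1)))}"

definition js :: "(nat \<Rightarrow> int) \<Rightarrow> (nat \<Rightarrow> int) \<Rightarrow> nat \<Rightarrow> nat" where
  "js a b n = card (JS a b n)"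

text \<open>Vectors of Z^(r+1) (inside R^(r+1)) as functions nat => int supported on {1..r+1};
  root i j is epsilon_i - epsilon_j.\<close>
definition root :: "nat \<Rightarrow> nat \<Rightarrow> nat \<Rightarrow> int" where
  "root i j = (\<lambda>k. (if k = i then 1 else 0) - (if k = j then 1 else 0))"

definition pos_roots_A :: "nat \<Rightarrow> (nat \<Rightarrow> int) set" where
  "pos_roots_A r = {root i j | i j. 1 \<le> i \<and> i < j \<and> j \<le> r + 1}"

definition P_A :: "nat \<Rightarrow> (nat \<Rightarrow> int) \<Rightarrow> (nat \<Rightarrow> int) multiset set" where
  "P_A r \<mu> = {M. set_mset M \<subseteq> pos_roots_A r \<and> sum_mset M = \<mu>}"

definition K_A :: "nat \<Rightarrow> (nat \<Rightarrow> int) \<Rightarrow> nat" where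
  "K_A r \<mu> = card (P_A r \<mu>)"

text \<open>Number of throws at time i (1 <= i <= n) to height j in the sequence ss.\<close>
definition throws :: "(nat \<Rightarrow> int) list \<Rightarrow> nat \<Rightarrow> nat \<Rightarrow> nat" where
  "throws ss i j = nat ((ss ! i) j - (ss ! (i - 1)) (j + 1))"

definition js_to_roots :: "nat \<Rightarrow> (nat \<Rightarrow> int) list \<Rightarrow> (nat \<Rightarrow> int) multiset" where
  "js_to_roots n ss = (\<Sum>i\<in>{1..n}. \<Sum>j\<in>{j. 1 \<le> j \<and> throws ss i j \<noteq> 0}.
       replicate_mset (throws ss i j) (root i (i + j)))"

definition prefix_state :: "nat \<Rightarrow> (nat \<Rightarrow> int) \<Rightarrow> nat \<Rightarrow> int" where
  "prefix_state r \<mu> = (\<lambda>k. if 1 \<le> k \<and> k \<le> r then \<mu> k else 0)"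

definition single_state :: "int \<Rightarrow> nat \<Rightarrow> int" where
  "single_state m = (\<lambda>k. if k = 1 then m else 0)"

end

theory Submission
  imports Defs
begin

text \<open>A juggling sequence is determined by its throw table c(i, j), the number of throws at
  time i to height j. Starting from \<open>\<langle>\<mu>\<^sub>1, \<dots>, \<mu>\<^sub>r\<rangle>\<close> and ending in a state with
  balls at height 1 only, every ball thrown during the r steps lands by time r + 1, so only the
  cells with i + j \<le> r + 1 occur, and these correspond bijectively to the positive roots
  \<open>\<epsilon>\<^sub>i - \<epsilon>\<^sub>i\<^sub>+\<^sub>j\<close> of \<open>A\<^sub>r\<close>. The k-th coordinate of the sum of the roots of a
  table is the number of balls thrown at time k minus the number landing at time k. The
  juggling conditions say exactly that this is \<open>\<mu>\<^sub>k\<close>: for k \<le> r, the balls at height 1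
  at time k - 1 are the \<open>\<mu>\<^sub>k\<close> initial ones plus those landing, and all are thrown; the
  \<open>\<mu>\<^sub>1 + \<dots> + \<mu>\<^sub>r = -\<mu>\<^sub>r\<^sub>+\<^sub>1\<close> balls of the final state are those landing at time r + 1.\<close>

lemma sum_supp_cong:
  assumes "finite A" "finite B" "\<And>x. f x \<noteq> 0 \<Longrightarrow> x \<in> A \<longleftrightarrow> x \<in> B"
  shows "sum f A = sum f B"
proof -
  have "sum f A = sum f (A \<inter> B)"
    by (rule sum.mono_neutral_right) (use assms in auto)
  also have "\<dots> = sum f B"
    by (rule sum.mono_neutral_left) (use assms in auto)
  finally show ?thesis .
qed

lemma sum_mset_sum_replicate_mset_apply:
  "sum_mset (\<Sum>a\<in>A. replicate_mset (f a) (g a)) k = (\<Sum>a\<in>A. int (f a) * g a k)"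
  by (induct A rule: infinite_finite_induct) simp_all

lemma count_sum_replicate_mset:
  assumes "finite A" "inj_on g A" "x \<in> A"
  shows "count (\<Sum>a\<in>A. replicate_mset (f a) (g a)) (g x) = f x"
proof -
  have "count (\<Sum>a\<in>A. replicate_mset (f a) (g a)) (g x) = (\<Sum>a\<in>A. if a = x then f a else 0)"
    using assms(2,3) by (auto simp: count_sum inj_on_eq_iff intro!: sum.cong)
  then show ?thesis
    using assms(1,3) by simp
qed

lemma set_mset_sum_replicate_mset:
  "set_mset (\<Sum>a\<in>A. replicate_mset (f a) (g a)) \<subseteq> g ` A"
  by (induct A rule: infinite_finite_induct) auto

lemma sum_replicate_mset_count:
  assumes "finite A" "inj_on g A" "set_mset M \<subseteq> g ` A"
  shows "(\<Sum>a\<in>A. replicate_mset (count M (g a)) (g a)) = M"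
proof (rule multiset_eqI)
  fix y
  show "count (\<Sum>a\<in>A. replicate_mset (count M (g a)) (g a)) y = count M y"
  proof (cases "y \<in> g ` A")
    case True
    then obtain x where "x \<in> A" "y = g x"
      by blast
    then show ?thesis
      using count_sum_replicate_mset[OF assms(1,2)] by simp
  next
    case False
    then have "y \<notin># M" "y \<notin># (\<Sum>a\<in>A. replicate_mset (count M (g a)) (g a))"
      using assms(3) set_mset_sum_replicate_mset[of "\<lambda>a. count M (g a)" g A] by blast+
    then show ?thesis
      by (simp add: not_in_iff)
  qed
qed

lemma bij_betw_sum_replicate_mset:
  assumes "finite A" "inj_on g A"
  shows "bij_betw (\<lambda>f. \<Sum>a\<in>A. replicate_mset (f a) (g a))
           {f. \<forall>a. a \<notin> A \<longrightarrow> f a = 0} {M. set_mset M \<subseteq> g ` A}"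
proof (rule bij_betw_byWitness[where f' = "\<lambda>M a. if a \<in> A then count M (g a) else 0"])
  have "(\<lambda>a. if a \<in> A then count (\<Sum>a\<in>A. replicate_mset (f a) (g a)) (g a) else 0) = f"
    if "\<forall>a. a \<notin> A \<longrightarrow> f a = 0" for f
  proof
    fix x
    show "(if x \<in> A then count (\<Sum>a\<in>A. replicate_mset (f a) (g a)) (g x) else 0) = f x"
      using count_sum_replicate_mset[OF assms, of x f] that by simp
  qed
  then show "\<forall>f\<in>{f. \<forall>a. a \<notin> A \<longrightarrow> f a = 0}.
      (\<lambda>a. if a \<in> A then count (\<Sum>a\<in>A. replicate_mset (f a) (g a)) (g a) else 0) = f"
    by simp
  have "(\<Sum>a\<in>A. replicate_mset (if a \<in> A then count M (g a) else 0) (g a)) = M"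
    if "set_mset M \<subseteq> g ` A" for M
    using sum_replicate_mset_count[OF assms that] by (simp cong: sum.cong)
  then show "\<forall>M\<in>{M. set_mset M \<subseteq> g ` A}.
      (\<Sum>a\<in>A. replicate_mset (if a \<in> A then count M (g a) else 0) (g a)) = M"
    by simp
  show "(\<lambda>f. \<Sum>a\<in>A. replicate_mset (f a) (g a)) ` {f. \<forall>a. a \<notin> A \<longrightarrow> f a = 0}
      \<subseteq> {M. set_mset M \<subseteq> g ` A}"
    using set_mset_sum_replicate_mset by fast
  show "(\<lambda>M a. if a \<in> A then count M (g a) else 0) ` {M. set_mset M \<subseteq> g ` A}
      \<subseteq> {f. \<forall>a. a \<notin> A \<longrightarrow> f a = 0}"
    by auto
qed

lemma root_eq_root_iff:
  assumes "i \<noteq> j" "i' \<noteq> j'"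
  shows "root i j = root i' j' \<longleftrightarrow> i = i' \<and> j = j'"
proof
  assume eq: "root i j = root i' j'"
  have "root i j i = root i' j' i" "root i j j = root i' j' j"
    using eq by simp_all
  then show "i = i' \<and> j = j'"
    using assms unfolding root_def by (auto split: if_splits)
qed simp

definition throw_cells :: "nat \<Rightarrow> (nat \<times> nat) set" where
  "throw_cells n = {(i, j). 1 \<le> i \<and> 1 \<le> j \<and> i + j \<le> n + 1}"

definition cell_root :: "nat \<times> nat \<Rightarrow> nat \<Rightarrow> int" where
  "cell_root = (\<lambda>(i, j). root i (i + j))"

definition throw_tables :: "nat \<Rightarrow> (nat \<times> nat \<Rightarrow> nat) set" where
  "throw_tables n = {c. \<forall>a. a \<notin> throw_cells n \<longrightarrow> c a = 0}"

definition table_roots :: "nat \<Rightarrow> (nat \<times> nat \<Rightarrow> nat) \<Rightarrow> (nat \<Rightarrow> int) multiset" where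
  "table_roots n c = (\<Sum>a\<in>throw_cells n. replicate_mset (c a) (cell_root a))"

lemma throw_tables_outside:
  "c \<in> throw_tables n \<Longrightarrow> a \<notin> throw_cells n \<Longrightarrow> c a = 0"
  unfolding throw_tables_def by blast

lemma finite_throw_cells: "finite (throw_cells n)"
  by (rule finite_subset[of _ "{1..n} \<times> {1..n}"]) (auto simp: throw_cells_def)

lemma inj_on_cell_root: "inj_on cell_root (throw_cells n)"
  by (auto simp: inj_on_def throw_cells_def cell_root_def root_eq_root_iff)

lemma cell_root_image: "cell_root ` throw_cells n = pos_roots_A n"
proof (rule set_eqI)
  fix x
  have "x \<in> cell_root ` throw_cells n \<longleftrightarrow> (\<exists>i j. 1 \<le> i \<and> 1 \<le> j \<and> i + j \<le> n + 1 \<and> x = root i (i + j))"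
    by (auto simp: throw_cells_def cell_root_def image_iff)
  also have "\<dots> \<longleftrightarrow> (\<exists>i j. 1 \<le> i \<and> i < j \<and> j \<le> n + 1 \<and> x = root i j)"
  proof
    assume "\<exists>i j. 1 \<le> i \<and> 1 \<le> j \<and> i + j \<le> n + 1 \<and> x = root i (i + j)"
    then obtain i j where "1 \<le> i" "1 \<le> j" "i + j \<le> n + 1" "x = root i (i + j)"
      by blast
    then show "\<exists>i j. 1 \<le> i \<and> i < j \<and> j \<le> n + 1 \<and> x = root i j"
      by (intro exI[of _ i] exI[of _ "i + j"]) simp
  next
    assume "\<exists>i j. 1 \<le> i \<and> i < j \<and> j \<le> n + 1 \<and> x = root i j"
    then obtain i j where "1 \<le> i" "i < j" "j \<le> n + 1" "x = root i j"
      by blast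
    then show "\<exists>i j. 1 \<le> i \<and> 1 \<le> j \<and> i + j \<le> n + 1 \<and> x = root i (i + j)"
      by (intro exI[of _ i] exI[of _ "j - i"]) simp
  qed
  finally show "x \<in> cell_root ` throw_cells n \<longleftrightarrow> x \<in> pos_roots_A n"
    by (auto simp: pos_roots_A_def)
qed

lemma bij_betw_table_roots:
  "bij_betw (table_roots n) (throw_tables n) {M. set_mset M \<subseteq> pos_roots_A n}"
  using bij_betw_sum_replicate_mset[OF finite_throw_cells inj_on_cell_root]
  unfolding table_roots_def throw_tables_def cell_root_image .

definition thrown :: "nat \<Rightarrow> (nat \<times> nat \<Rightarrow> nat) \<Rightarrow> nat \<Rightarrow> nat" where
  "thrown n c i = (\<Sum>j\<in>{1..n}. c (i, j))"

definition landing :: "(nat \<times> nat \<Rightarrow> nat) \<Rightarrow> nat \<Rightarrow> nat" where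
  "landing c k = (\<Sum>t\<in>{1..<k}. c (t, k - t))"

lemma thrown_eq_0:
  assumes "c \<in> throw_tables n" "k = 0 \<or> k > n"
  shows "thrown n c k = 0"
  unfolding thrown_def
proof (rule sum.neutral, rule ballI)
  fix j assume "j \<in> {1..n}"
  then have "(k, j) \<notin> throw_cells n"
    using assms(2) by (auto simp: throw_cells_def)
  then show "c (k, j) = 0"
    by (rule throw_tables_outside[OF assms(1)])
qed

lemma landing_eq_0:
  assumes "c \<in> throw_tables n" "k > Suc n"
  shows "landing c k = 0"
  unfolding landing_def
proof (rule sum.neutral, rule ballI)
  fix t assume "t \<in> {1..<k}"
  then have "(t, k - t) \<notin> throw_cells n"
    using assms(2) by (auto simp: throw_cells_def)
  then show "c (t, k - t) = 0"
    by (rule throw_tables_outside[OF assms(1)])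
qed

lemma sum_throw_cells_filter:
  assumes "c \<in> throw_tables n" "finite B" "\<And>a. a \<in> throw_cells n \<Longrightarrow> P a \<longleftrightarrow> a \<in> B"
  shows "(\<Sum>a\<in>throw_cells n. if P a then int (c a) else 0) = (\<Sum>a\<in>B. int (c a))"
proof -
  have "(\<Sum>a\<in>throw_cells n. if P a then int (c a) else 0) = (\<Sum>a\<in>{a \<in> throw_cells n. P a}. int (c a))"
    by (simp add: sum.inter_filter finite_throw_cells)
  also have "\<dots> = (\<Sum>a\<in>B. int (c a))"
  proof (rule sum_supp_cong)
    fix a assume "int (c a) \<noteq> 0"
    then have "a \<in> throw_cells n"
      using throw_tables_outside[OF assms(1)] by fastforce
    then show "a \<in> {a \<in> throw_cells n. P a} \<longleftrightarrow> a \<in> B"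
      using assms(3) by blast
  qed (simp_all add: finite_throw_cells assms(2))
  finally show ?thesis .
qed

lemma sum_mset_table_roots:
  assumes c: "c \<in> throw_tables n"
  shows "sum_mset (table_roots n c) k = int (thrown n c k) - int (landing c k)"
proof -
  have "sum_mset (table_roots n c) k = (\<Sum>a\<in>throw_cells n. int (c a) * cell_root a k)"
    by (simp add: table_roots_def sum_mset_sum_replicate_mset_apply)
  also have "\<dots> = (\<Sum>a\<in>throw_cells n. if fst a = k then int (c a) else 0)
                 - (\<Sum>a\<in>throw_cells n. if fst a + snd a = k then int (c a) else 0)"
    by (simp add: sum_subtractf[symmetric] cell_root_def root_def split_def)
       (intro sum.cong refl, simp)
  also have "(\<Sum>a\<in>throw_cells n. if fst a = k then int (c a) else 0) = (\<Sum>a\<in>Pair k ` {1..n}. int (c a))"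
    using c by (intro sum_throw_cells_filter) (auto simp: throw_cells_def)
  also have "\<dots> = int (thrown n c k)"
    by (subst sum.reindex) (auto simp: inj_on_def thrown_def)
  also have "(\<Sum>a\<in>throw_cells n. if fst a + snd a = k then int (c a) else 0)
             = (\<Sum>a\<in>(\<lambda>t. (t, k - t)) ` {1..<k}. int (c a))"
    using c by (intro sum_throw_cells_filter) (auto simp: throw_cells_def image_iff)
  also have "\<dots> = int (landing c k)"
    by (simp add: sum.reindex inj_on_def landing_def)
  finally show ?thesis .
qed

text \<open>The state reached after i steps from a with throw table c: height k holds the ball
  initially at height i + k and the balls thrown at times t \<le> i to height i + k - t.\<close>

definition state_after :: "(nat \<Rightarrow> int) \<Rightarrow> (nat \<times> nat \<Rightarrow> nat) \<Rightarrow> nat \<Rightarrow> nat \<Rightarrow> int" where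
  "state_after a c i k = (if k = 0 then 0 else a (i + k) + (\<Sum>t\<in>{1..i}. int (c (t, i + k - t))))"

lemma state_after_0: "a 0 = 0 \<Longrightarrow> state_after a c 0 = a"
  by (auto simp: state_after_def)

lemma state_after_Suc:
  assumes "k \<ge> 1"
  shows "state_after a c (Suc i) k = state_after a c i (k + 1) + int (c (Suc i, k))"
  using assms by (simp add: state_after_def sum.cl_ivl_Suc)

lemma state_after_1: "state_after a c i 1 = a (Suc i) + int (landing c (Suc i))"
  by (simp add: state_after_def landing_def of_nat_sum atLeastLessThanSuc_atLeastAtMost)

lemma single_state_eq_iff: "single_state x = single_state y \<longleftrightarrow> x = y"
  by (metis single_state_def)

lemma state_after_final:
  assumes "\<forall>k>n. a k = 0" "c \<in> throw_tables n"
  shows "state_after a c n = single_state (int (landing c (Suc n)))"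
proof
  fix k
  have "c (t, n + k - t) = 0" if "k \<ge> 2" "t \<in> {1..n}" for t
    using throw_tables_outside[OF assms(2)] that by (simp add: throw_cells_def)
  then show "state_after a c n k = single_state (int (landing c (Suc n))) k"
    using assms(1) state_after_1[of a c n]
    by (cases "k \<ge> 2") (auto simp: state_after_def single_state_def)
qed

lemma jstate_state_after:
  assumes "jstate a" "c \<in> throw_tables n"
  shows "jstate (state_after a c i)"
proof -
  have "{k. state_after a c i k \<noteq> 0} \<subseteq> (\<lambda>k. i + k) -` {m. a m \<noteq> 0} \<union> {..n}"
  proof
    fix k assume k: "k \<in> {k. state_after a c i k \<noteq> 0}"
    show "k \<in> (\<lambda>k. i + k) -` {m. a m \<noteq> 0} \<union> {..n}"
    proof (rule ccontr)
      assume "k \<notin> (\<lambda>k. i + k) -` {m. a m \<noteq> 0} \<union> {..n}"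
      then have "a (i + k) = 0" "k > n"
        by auto
      moreover have "c (t, i + k - t) = 0" if "t \<in> {1..i}" for t
        using throw_tables_outside[OF assms(2)] that \<open>k > n\<close> by (simp add: throw_cells_def)
      ultimately show False
        using k by (simp add: state_after_def)
    qed
  qed
  moreover have "finite ((\<lambda>k. i + k) -` {m. a m \<noteq> 0})"
    using assms(1) by (intro finite_vimageI) (auto simp: jstate_def)
  ultimately have "finite {k. state_after a c i k \<noteq> 0}"
    by (meson finite_Un finite_atMost finite_subset)
  moreover have "state_after a c i 0 = 0"
    by (simp add: state_after_def)
  ultimately show ?thesis
    unfolding jstate_def by blast
qed

lemma jstep_state_after:
  assumes "\<And>j. j > m \<Longrightarrow> c (Suc i, j) = 0"
    and "state_after a c i 1 = int (\<Sum>j\<in>{1..m}. c (Suc i, j))"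
  shows "jstep (state_after a c i) (state_after a c (Suc i))"
proof -
  define d where "d j = (if j = 0 then 0 else c (Suc i, j))" for j
  have supp: "{j. d j \<noteq> 0} \<subseteq> {1..m}"
  proof
    fix j assume "j \<in> {j. d j \<noteq> 0}"
    then have "j \<noteq> 0" "c (Suc i, j) \<noteq> 0"
      unfolding d_def by (cases "j = 0", simp_all)+
    moreover have "\<not> j > m"
      using assms(1)[of j] \<open>c (Suc i, j) \<noteq> 0\<close> by blast
    ultimately show "j \<in> {1..m}"
      by simp
  qed
  then have fin: "finite {j. d j \<noteq> 0}"
    by (rule finite_subset) simp
  have "sum d {j. d j \<noteq> 0} = sum d {1..m}"
    by (rule sum_supp_cong[OF fin]) (use supp in auto)
  also have "\<dots> = (\<Sum>j\<in>{1..m}. c (Suc i, j))"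
    by (rule sum.cong) (simp_all add: d_def)
  finally have count: "int (sum d {j. d j \<noteq> 0}) = state_after a c i 1"
    using assms(2) by simp
  have "\<forall>k\<ge>1. state_after a c (Suc i) k = state_after a c i (k + 1) + int (d k)"
  proof (intro allI impI)
    fix k :: nat assume "k \<ge> 1"
    then show "state_after a c (Suc i) k = state_after a c i (k + 1) + int (d k)"
      unfolding state_after_Suc[OF \<open>k \<ge> 1\<close>] by (simp add: d_def)
  qed
  moreover have "d 0 = 0"
    by (simp add: d_def)
  ultimately show ?thesis
    unfolding jstep_def using fin count by blast
qed

lemma JS_nth_Suc_apply:
  assumes "ss \<in> JS a b n" "i < n" "j \<ge> 1"
  shows "(ss ! Suc i) j = (ss ! i) (j + 1) + int (throws ss (Suc i) j)"
proof -
  have "jstep (ss ! i) (ss ! Suc i)"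
    using assms(1,2) by (simp add: JS_def)
  then obtain d :: "nat \<Rightarrow> nat" where "\<forall>k\<ge>1. (ss ! Suc i) k = (ss ! i) (k + 1) + int (d k)"
    unfolding jstep_def by blast
  then show ?thesis
    using assms(3) by (simp add: throws_def)
qed

lemma JS_throw_count:
  assumes "ss \<in> JS a b n" "i < n" "\<And>j. j > m \<Longrightarrow> throws ss (Suc i) j = 0"
  shows "(ss ! i) 1 = int (\<Sum>j\<in>{1..m}. throws ss (Suc i) j)"
proof -
  obtain d :: "nat \<Rightarrow> nat" where d0: "d 0 = 0" and fin: "finite {k. d k \<noteq> 0}"
    and count: "int (sum d {k. d k \<noteq> 0}) = (ss ! i) 1"
    and step: "\<forall>k\<ge>1. (ss ! Suc i) k = (ss ! i) (k + 1) + int (d k)"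
  proof -
    have "jstep (ss ! i) (ss ! Suc i)"
      using assms(1,2) by (simp add: JS_def)
    then show thesis
      using that unfolding jstep_def by blast
  qed
  have d_throws: "d j = throws ss (Suc i) j" if "j \<ge> 1" for j
    using step that JS_nth_Suc_apply[OF assms(1,2) that] by simp
  have "sum d {k. d k \<noteq> 0} = sum d {1..m}"
  proof (rule sum_supp_cong[OF fin])
    fix j assume "d j \<noteq> 0"
    then show "j \<in> {k. d k \<noteq> 0} \<longleftrightarrow> j \<in> {1..m}"
      using d0 d_throws assms(3) by (metis atLeastAtMost_iff leI less_one mem_Collect_eq)
  qed simp
  also have "\<dots> = (\<Sum>j\<in>{1..m}. throws ss (Suc i) j)"
    using d_throws by (intro sum.cong) auto
  finally show ?thesis
    using count by simp
qed

definition seq_table :: "nat \<Rightarrow> (nat \<Rightarrow> int) list \<Rightarrow> nat \<times> nat \<Rightarrow> nat" where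
  "seq_table n ss = (\<lambda>(i, j). if 1 \<le> i \<and> i \<le> n \<and> 1 \<le> j then throws ss i j else 0)"

definition seq_of_table :: "(nat \<Rightarrow> int) \<Rightarrow> nat \<Rightarrow> (nat \<times> nat \<Rightarrow> nat) \<Rightarrow> (nat \<Rightarrow> int) list" where
  "seq_of_table a n c = map (state_after a c) [0..<Suc n]"

lemma JS_nth_eq_state_after:
  assumes "ss \<in> JS a b n" "i \<le> n"
  shows "ss ! i = state_after a (seq_table n ss) i"
  using assms(2)
proof (induction i)
  case 0
  then show ?case
    using assms(1) by (auto simp: JS_def jstate_def state_after_0)
next
  case (Suc i)
  have "jstate (ss ! Suc i)"
    using assms(1) Suc.prems by (auto simp: JS_def)
  moreover have "(ss ! Suc i) k = state_after a (seq_table n ss) (Suc i) k" if "k \<ge> 1" for k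
    using JS_nth_Suc_apply[OF assms(1) _ that] state_after_Suc[OF that] Suc that
    by (simp add: seq_table_def)
  ultimately show ?case
    by (auto simp: jstate_def state_after_def fun_eq_iff)
qed

lemma length_seq_of_table [simp]: "length (seq_of_table a n c) = Suc n"
  by (simp add: seq_of_table_def)

lemma nth_seq_of_table [simp]: "i \<le> n \<Longrightarrow> seq_of_table a n c ! i = state_after a c i"
  by (simp add: seq_of_table_def nth_append del: upt_Suc)

lemma seq_table_in_throw_tables:
  assumes ss: "ss \<in> JS a (single_state m) n" and a: "\<forall>k>n. a k = 0"
  shows "seq_table n ss \<in> throw_tables n"
  unfolding throw_tables_def
proof (intro CollectI allI impI)
  fix x assume x: "x \<notin> throw_cells n"
  obtain i j where ij: "x = (i, j)"
    by fastforce
  let ?c = "seq_table n ss"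
  show "?c x = 0"
  proof (rule ccontr)
    assume nz: "?c x \<noteq> 0"
    then have i: "1 \<le> i" "i \<le> n" and j: "1 \<le> j" "i + j \<ge> n + 2"
      using x by (auto simp: ij seq_table_def throw_cells_def split: if_splits)
    define k where "k = i + j - n"
    have k: "k \<ge> 2"
      using j by (simp add: k_def)
    have "0 = state_after a ?c n k"
      using JS_nth_eq_state_after[OF ss, of n] ss k by (simp add: JS_def single_state_def)
    also have "\<dots> = (\<Sum>t\<in>{1..n}. int (?c (t, n + k - t)))"
      using a j by (simp add: state_after_def k_def)
    finally have "int (?c (i, n + k - i)) = 0"
      using i by (subst (asm) eq_commute, subst (asm) sum_nonneg_eq_0_iff) auto
    then show False
      using nz j by (simp add: ij k_def)
  qed
qed

lemma js_to_roots_eq_table_roots: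
  assumes ss: "ss \<in> JS a b n" and table: "seq_table n ss \<in> throw_tables n"
  shows "js_to_roots n ss = table_roots n (seq_table n ss)"
proof -
  let ?c = "seq_table n ss"
  let ?S = "\<lambda>i. {j. 1 \<le> j \<and> throws ss i j \<noteq> 0}"
  have c_throws: "?c (i, j) = throws ss i j" if "i \<in> {1..n}" "j \<in> ?S i" for i j
    using that by (simp add: seq_table_def)
  have S_cells: "(i, j) \<in> throw_cells n" if "i \<in> {1..n}" "j \<in> ?S i" for i j
    using throw_tables_outside[OF table, of "(i, j)"] c_throws[OF that] that by auto
  have S_finite: "finite (?S i)" if "i \<in> {1..n}" for i
  proof (rule finite_subset)
    show "?S i \<subseteq> {1..n}"
    proof
      fix j assume "j \<in> ?S i"
      then show "j \<in> {1..n}"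
        using S_cells[OF that \<open>j \<in> ?S i\<close>] by (auto simp: throw_cells_def)
    qed
  qed simp
  then have "js_to_roots n ss
      = (\<Sum>a\<in>Sigma {1..n} ?S. replicate_mset (throws ss (fst a) (snd a)) (cell_root a))"
    by (simp add: js_to_roots_def sum.Sigma cell_root_def split_def)
  also have "\<dots> = (\<Sum>a\<in>Sigma {1..n} ?S. replicate_mset (?c a) (cell_root a))"
    by (intro sum.cong refl) (auto simp: seq_table_def)
  also have "\<dots> = table_roots n ?c"
    unfolding table_roots_def
  proof (rule sum_supp_cong)
    fix x assume "replicate_mset (?c x) (cell_root x) \<noteq> 0"
    then have "?c x \<noteq> 0"
      by auto
    then show "x \<in> Sigma {1..n} ?S \<longleftrightarrow> x \<in> throw_cells n"
      using S_cells throw_tables_outside[OF table, of x]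
      by (auto simp: seq_table_def split: prod.splits if_splits)
  qed (rule finite_SigmaI[OF finite_atLeastAtMost S_finite], assumption, rule finite_throw_cells)
  finally show ?thesis .
qed

definition juggling_tables :: "(nat \<Rightarrow> int) \<Rightarrow> (nat \<Rightarrow> int) \<Rightarrow> nat \<Rightarrow> (nat \<times> nat \<Rightarrow> nat) set" where
  "juggling_tables a b n = {c \<in> throw_tables n. state_after a c n = b \<and>
     (\<forall>i<n. state_after a c i 1 = int (thrown n c (Suc i)))}"

lemma seq_of_table_in_JS:
  assumes "jstate a" "c \<in> throw_tables n" "state_after a c n = b"
    and "\<forall>i<n. state_after a c i 1 = int (thrown n c (Suc i))"
  shows "seq_of_table a n c \<in> JS a b n"
proof -
  let ?ss = "seq_of_table a n c"
  have "jstep (?ss ! i) (?ss ! (i + 1))" if "i < n" for i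
    unfolding nth_seq_of_table[OF less_imp_le[OF that]] Suc_eq_plus1[symmetric]
      nth_seq_of_table[OF Suc_leI[OF that]]
  proof (rule jstep_state_after)
    show "c (Suc i, j) = 0" if "j > n" for j
      using throw_tables_outside[OF assms(2)] that by (simp add: throw_cells_def)
    show "state_after a c i 1 = int (\<Sum>j\<in>{1..n}. c (Suc i, j))"
      using assms(4) that by (simp add: thrown_def)
  qed
  moreover have "\<forall>s\<in>set ?ss. jstate s"
    using jstate_state_after[OF assms(1,2)] by (auto simp: seq_of_table_def)
  moreover have "?ss ! 0 = a" "?ss ! n = b"
    using assms(1,3) by (simp_all add: jstate_def state_after_0)
  moreover have "length ?ss = n + 1"
    by simp
  ultimately show ?thesis
    unfolding JS_def by blast
qed

lemma seq_table_seq_of_table: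
  assumes "c \<in> throw_tables n"
  shows "seq_table n (seq_of_table a n c) = c"
proof
  fix x :: "nat \<times> nat"
  obtain i j where x: "x = (i, j)"
    by fastforce
  show "seq_table n (seq_of_table a n c) x = c x"
  proof (cases "1 \<le> i \<and> i \<le> n \<and> 1 \<le> j")
    case True
    then obtain i' where "i = Suc i'"
      using not0_implies_Suc by fastforce
    then show ?thesis
      using True x state_after_Suc[of j a c i'] by (simp add: seq_table_def throws_def)
  next
    case False
    then show ?thesis
      using x throw_tables_outside[OF assms] by (auto simp: seq_table_def throw_cells_def)
  qed
qed

lemma seq_of_table_seq_table:
  assumes ss: "ss \<in> JS a b n"
  shows "seq_of_table a n (seq_table n ss) = ss"
proof (rule nth_equalityI)
  show "length (seq_of_table a n (seq_table n ss)) = length ss"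
    using ss by (simp add: JS_def)
  then show "seq_of_table a n (seq_table n ss) ! i = ss ! i"
    if "i < length (seq_of_table a n (seq_table n ss))" for i
    using JS_nth_eq_state_after[OF ss] that by simp
qed

lemma seq_table_in_juggling_tables:
  assumes ss: "ss \<in> JS a b n" and table: "seq_table n ss \<in> throw_tables n"
  shows "seq_table n ss \<in> juggling_tables a b n"
proof -
  let ?c = "seq_table n ss"
  have "state_after a ?c n = b"
    using ss JS_nth_eq_state_after[OF ss, of n] by (simp add: JS_def)
  moreover have "state_after a ?c i 1 = int (thrown n ?c (Suc i))" if "i < n" for i
  proof -
    have "?c (Suc i, j) = throws ss (Suc i) j" if "j \<ge> 1" for j
      using \<open>i < n\<close> that by (simp add: seq_table_def)
    moreover have "throws ss (Suc i) j = 0" if "j > n" for j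
      using throw_tables_outside[OF table, of "(Suc i, j)"] \<open>i < n\<close> that
      by (simp add: seq_table_def throw_cells_def)
    ultimately show ?thesis
      using JS_throw_count[OF ss that] JS_nth_eq_state_after[OF ss, of i] that
      by (simp add: thrown_def)
  qed
  ultimately show ?thesis
    using table by (simp add: juggling_tables_def)
qed

lemma bij_betw_seq_table:
  assumes "jstate a" "\<And>ss. ss \<in> JS a b n \<Longrightarrow> seq_table n ss \<in> throw_tables n"
  shows "bij_betw (seq_table n) (JS a b n) (juggling_tables a b n)"
proof (rule bij_betw_byWitness[where f' = "seq_of_table a n"])
  show "\<forall>ss\<in>JS a b n. seq_of_table a n (seq_table n ss) = ss"
    by (simp add: seq_of_table_seq_table)
  show "\<forall>c\<in>juggling_tables a b n. seq_table n (seq_of_table a n c) = c"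
    by (simp add: juggling_tables_def seq_table_seq_of_table)
  show "seq_of_table a n ` juggling_tables a b n \<subseteq> JS a b n"
    using assms(1) by (auto simp: juggling_tables_def intro: seq_of_table_in_JS)
  show "seq_table n ` JS a b n \<subseteq> juggling_tables a b n"
    using assms(2) seq_table_in_juggling_tables by blast
qed

lemma sum_table_roots_eq_iff:
  assumes c: "c \<in> throw_tables r"
    and \<mu>_supp: "\<forall>k. (k = 0 \<or> k > r + 1) \<longrightarrow> \<mu> k = 0"
    and \<mu>_sum: "(\<Sum>k=1..r+1. \<mu> k) = 0"
  shows "sum_mset (table_roots r c) = \<mu> \<longleftrightarrow>
         c \<in> juggling_tables (prefix_state r \<mu>) (single_state (\<Sum>k=1..r. \<mu> k)) r"
proof -
  let ?a = "prefix_state r \<mu>" and ?m = "\<Sum>k=1..r. \<mu> k"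
  let ?bal = "\<lambda>k. int (thrown r c k) - int (landing c k) = \<mu> k"
  have \<mu>_last: "\<mu> (Suc r) = - ?m"
    using \<mu>_sum by (simp add: sum.cl_ivl_Suc)
  have "sum_mset (table_roots r c) = \<mu> \<longleftrightarrow> (\<forall>k. ?bal k)"
    by (simp add: fun_eq_iff sum_mset_table_roots[OF c])
  also have "\<dots> \<longleftrightarrow> (\<forall>i<r. ?bal (Suc i)) \<and> ?bal (Suc r)"
  proof (intro iffI allI)
    fix k assume bal: "(\<forall>i<r. ?bal (Suc i)) \<and> ?bal (Suc r)"
    consider "k = 0 \<or> k > Suc r" | i where "i < r" "k = Suc i" | "k = Suc r"
      by (metis Suc_lessI less_Suc_eq_0_disj linorder_neqE_nat)
    then show "?bal k"
    proof cases
      case 1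
      then show ?thesis
        using \<mu>_supp thrown_eq_0[OF c] landing_eq_0[OF c] by (auto simp: landing_def)
    qed (use bal in auto)
  qed simp
  also have "\<dots> \<longleftrightarrow> (\<forall>i<r. state_after ?a c i 1 = int (thrown r c (Suc i))) \<and> state_after ?a c r = single_state ?m"
  proof -
    have "state_after ?a c i 1 = \<mu> (Suc i) + int (landing c (Suc i))" if "i < r" for i
      using that state_after_1[of ?a c i] by (simp add: prefix_state_def)
    moreover have "state_after ?a c r = single_state (int (landing c (Suc r)))"
      by (rule state_after_final[OF _ c]) (simp add: prefix_state_def)
    ultimately show ?thesis
      using \<mu>_last thrown_eq_0[OF c, of "Suc r"] by (auto simp: single_state_eq_iff)
  qed
  also have "\<dots> \<longleftrightarrow> c \<in> juggling_tables ?a (single_state ?m) r"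
    using c by (auto simp: juggling_tables_def)
  finally show ?thesis .
qed

lemma bij_betw_table_roots_juggling_tables:
  assumes "\<forall>k. (k = 0 \<or> k > r + 1) \<longrightarrow> \<mu> k = 0" "(\<Sum>k=1..r+1. \<mu> k) = 0"
  shows "bij_betw (table_roots r)
           (juggling_tables (prefix_state r \<mu>) (single_state (\<Sum>k=1..r. \<mu> k)) r) (P_A r \<mu>)"
proof -
  have "bij_betw (table_roots r)
      {c \<in> throw_tables r. sum_mset (table_roots r c) = \<mu>}
      {M \<in> {M. set_mset M \<subseteq> pos_roots_A r}. sum_mset M = \<mu>}"
    by (rule bij_betw_Collect[OF bij_betw_table_roots]) simp
  moreover have "{c \<in> throw_tables r. sum_mset (table_roots r c) = \<mu>}
      = juggling_tables (prefix_state r \<mu>) (single_state (\<Sum>k=1..r. \<mu> k)) r"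
    using sum_table_roots_eq_iff[OF _ assms] by (auto simp: juggling_tables_def)
  moreover have "{M \<in> {M. set_mset M \<subseteq> pos_roots_A r}. sum_mset M = \<mu>} = P_A r \<mu>"
    by (auto simp: P_A_def)
  ultimately show ?thesis
    by simp
qed

theorem mainTheorem4:
  fixes r :: nat and \<mu> :: "nat \<Rightarrow> int"
  assumes "r \<ge> 1"
    and "\<forall>k. (k = 0 \<or> k > r + 1) \<longrightarrow> \<mu> k = 0"
    and "(\<Sum>k=1..r+1. \<mu> k) = 0"
  shows "bij_betw (js_to_roots r)
           (JS (prefix_state r \<mu>) (single_state (\<Sum>k=1..r. \<mu> k)) r) (P_A r \<mu>)
         \<and> K_A r \<mu> = js (prefix_state r \<mu>) (single_state (\<Sum>k=1..r. \<mu> k)) r"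
proof -
  let ?a = "prefix_state r \<mu>" and ?b = "single_state (\<Sum>k=1..r. \<mu> k)"
  have "jstate ?a"
    unfolding jstate_def by (auto simp: prefix_state_def intro: finite_subset[of _ "{1..r}"])
  have tables: "seq_table r ss \<in> throw_tables r" if "ss \<in> JS ?a ?b r" for ss
    by (rule seq_table_in_throw_tables[OF that]) (simp add: prefix_state_def)
  have "bij_betw (table_roots r \<circ> seq_table r) (JS ?a ?b r) (P_A r \<mu>)"
    using bij_betw_seq_table[OF \<open>jstate ?a\<close> tables]
      bij_betw_table_roots_juggling_tables[OF assms(2,3)]
    by (rule bij_betw_trans)
  then have bij: "bij_betw (js_to_roots r) (JS ?a ?b r) (P_A r \<mu>)"
    by (rule bij_betw_cong[THEN iffD1, rotated]) (simp add: js_to_roots_eq_table_roots tables)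
  then show ?thesis
    using bij_betw_same_card by (fastforce simp: K_A_def js_def)
qed

end
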